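(* A convex polyomino is (horizontally) centered if and only if for any pair of its cells there is a path in the polyomino connecting them of the form $S^{h_1}E^{k}S^{h_2}$ or $S^{h_1}W^{k}S^{h_2}$ with integers $h_1,h_2,k\geq 0$ (i.e. $h_1$ south steps, then $k$ east steps or $k$ west steps, then $h_2$ south steps).
   Context: A cell is a unit square of $\mathbb Z\times\mathbb Z$; a polyomino is a finite connected union of cells with no cut point, up to translation. A polyomino is convex if its intersection with every vertical and every horizontal line of cells is connected. The minimal bounding rectangle of a convex polyomino is the smallest lattice rectangle containing it. A convex polyomino is (horizontally) centered if it contains at least one row that touches both the left side and the right side of its minimal bounding rectangle. A path in a polyomino is a self-avoiding sequence of unit steps between adjacent cells of the polyomino, steps being $N=(0,1)$, $S=(0,-1)$, $E=(1,0)$, $W=(-1,0)$; exponents denote repetition of a step. *)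

theory Defs
  imports Main
begin

text \<open>Cells are identified with their lower-left corner (x, y) in Z x Z.
  A polyomino is a finite nonempty set of cells, connected via edge-adjacency
  (this is the "no cut point" condition: cells sharing only a corner do not connect).\<close>

type_synonym cell = "int \<times> int"

definition adjacent :: "cell \<Rightarrow> cell \<Rightarrow> bool" where
  "adjacent a b \<longleftrightarrow> \<bar>fst a - fst b\<bar> + \<bar>snd a - snd b\<bar> = 1"

definition polyomino :: "cell set \<Rightarrow> bool" where
  "polyomino P \<longleftrightarrow> finite P \<and> P \<noteq> {} \<and>
     (\<forall>a\<in>P. \<forall>b\<in>P. (a, b) \<in> {(c, d). c \<in> P \<and> d \<in> P \<and> adjacent c d}\<^sup>*)"

definition convex_polyomino :: "cell set \<Rightarrow> bool" where
  "convex_polyomino P \<longleftrightarrow> polyomino P \<and>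
     (\<forall>y x1 x2 x. (x1, y) \<in> P \<and> (x2, y) \<in> P \<and> x1 \<le> x \<and> x \<le> x2 \<longrightarrow> (x, y) \<in> P) \<and>
     (\<forall>x y1 y2 y. (x, y1) \<in> P \<and> (x, y2) \<in> P \<and> y1 \<le> y \<and> y \<le> y2 \<longrightarrow> (x, y) \<in> P)"

definition centered :: "cell set \<Rightarrow> bool" where
  "centered P \<longleftrightarrow> (\<exists>y. (Min (fst ` P), y) \<in> P \<and> (Max (fst ` P), y) \<in> P)"

datatype step = N | S | E | W

fun move :: "step \<Rightarrow> cell \<Rightarrow> cell" where
  "move N (x, y) = (x, y + 1)"
| "move S (x, y) = (x, y - 1)"
| "move E (x, y) = (x + 1, y)"
| "move W (x, y) = (x - 1, y)"

fun visited :: "cell \<Rightarrow> step list \<Rightarrow> cell list" where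
  "visited a [] = [a]"
| "visited a (s # ws) = a # visited (move s a) ws"

definition is_path :: "cell set \<Rightarrow> cell \<Rightarrow> cell \<Rightarrow> step list \<Rightarrow> bool" where
  "is_path P a b ws \<longleftrightarrow> set (visited a ws) \<subseteq> P \<and> distinct (visited a ws) \<and>
     last (visited a ws) = b"

definition SES_word :: "nat \<Rightarrow> step \<Rightarrow> nat \<Rightarrow> nat \<Rightarrow> step list" where
  "SES_word h1 d k h2 = replicate h1 S @ replicate k d @ replicate h2 S"

end

theory Submission
  imports Defs
begin

text \<open>If some row \<open>y\<^sub>0\<close> spans the bounding rectangle, column convexity makes every column
  cross that row. To join cells \<open>a\<close> above \<open>b\<close>, clamp \<open>y\<^sub>0\<close> into \<open>[snd b, snd a]\<close>: both
  columns still contain the clamped row, so one can go south to it, across it and south again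
  to \<open>b\<close>. Conversely, the horizontal leg of such a path between a leftmost and a rightmost
  cell lies in a row touching both sides of the bounding rectangle. Self-avoidance is never an
  issue: along a word in \<open>S\<close> and one horizontal direction the potential \<open>\<plusminus>x - y\<close> increases
  at every step.\<close>

fun dx :: "step \<Rightarrow> int" where
  "dx N = 0" | "dx S = 0" | "dx E = 1" | "dx W = -1"

fun dy :: "step \<Rightarrow> int" where
  "dy N = 1" | "dy S = -1" | "dy E = 0" | "dy W = 0"

lemma move_eq: "move s c = (fst c + dx s, snd c + dy s)"
  by (cases s; cases c) auto

lemma visited_not_Nil: "visited a ws \<noteq> []"
  by (cases ws) auto

lemma start_in_set_visited: "a \<in> set (visited a ws)"
  by (cases ws) auto

lemma visited_append:
  "visited a (xs @ ys) = butlast (visited a xs) @ visited (last (visited a xs)) ys"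
  by (induction xs arbitrary: a) (auto simp: visited_not_Nil)

lemma last_visited_append:
  "last (visited a (xs @ ys)) = last (visited (last (visited a xs)) ys)"
  by (simp add: visited_append visited_not_Nil)

lemma set_visited_append:
  "set (visited a (xs @ ys)) = set (visited a xs) \<union> set (visited (last (visited a xs)) ys)"
proof -
  have "set (visited a xs) = set (butlast (visited a xs)) \<union> {last (visited a xs)}"
    by (metis append_butlast_last_id visited_not_Nil set_append empty_set list.simps(15))
  moreover have "last (visited a xs) \<in> set (visited (last (visited a xs)) ys)"
    by (rule start_in_set_visited)
  ultimately show ?thesis
    unfolding visited_append by auto
qed

lemma visited_replicate:
  "visited a (replicate n s) = map (\<lambda>i. (fst a + int i * dx s, snd a + int i * dy s)) [0..<Suc n]"
proof (induction n arbitrary: a)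
  case 0
  then show ?case by simp
next
  case (Suc n)
  then show ?case
    by (simp add: move_eq algebra_simps upt_conv_Cons map_Suc_upt[symmetric] del: upt_Suc)
qed

lemma last_visited_replicate:
  "last (visited a (replicate n s)) = (fst a + int n * dx s, snd a + int n * dy s)"
  by (simp add: visited_replicate)

lemma set_visited_replicate:
  "set (visited a (replicate n s)) = {(fst a + int i * dx s, snd a + int i * dy s) | i. i \<le> n}"
  by (auto simp: visited_replicate)

lemma distinct_visited_if_potential_increases:
  fixes f :: "cell \<Rightarrow> int"
  assumes "\<And>s c. s \<in> set ws \<Longrightarrow> f c < f (move s c)"
  shows "distinct (visited a ws) \<and> (\<forall>c \<in> set (visited a ws). f a \<le> f c)"
  using assms
proof (induction ws arbitrary: a)
  case Nil
  then show ?case by simp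
next
  case (Cons s ws)
  then have "f a < f (move s a)"
    and "distinct (visited (move s a) ws)" "\<forall>c \<in> set (visited (move s a) ws). f (move s a) \<le> f c"
    by auto
  then show ?case
    by fastforce
qed

lemma distinct_visited_SES_word:
  assumes "d \<in> {E, W}"
  shows "distinct (visited a (SES_word h1 d k h2))"
proof -
  have "dx d * fst c - snd c < dx d * fst (move s c) - snd (move s c)"
    if "s \<in> set (SES_word h1 d k h2)" for s c
    using that assms by (auto simp: SES_word_def move_eq)
  then show ?thesis
    using distinct_visited_if_potential_increases[where f = "\<lambda>c. dx d * fst c - snd c"] by blast
qed

lemma convex_polyomino_row:
  assumes "convex_polyomino P" "(x1, y) \<in> P" "(x2, y) \<in> P" "min x1 x2 \<le> x" "x \<le> max x1 x2"
  shows "(x, y) \<in> P"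
proof -
  have "\<And>u v. (u, y) \<in> P \<Longrightarrow> (v, y) \<in> P \<Longrightarrow> u \<le> x \<Longrightarrow> x \<le> v \<Longrightarrow> (x, y) \<in> P"
    using assms(1) unfolding convex_polyomino_def by blast
  then show ?thesis
    using assms(2-5) by (cases "x1 \<le> x2") auto
qed

lemma convex_polyomino_column:
  assumes "convex_polyomino P" "(x, y1) \<in> P" "(x, y2) \<in> P" "min y1 y2 \<le> y" "y \<le> max y1 y2"
  shows "(x, y) \<in> P"
proof -
  have "\<And>u v. (x, u) \<in> P \<Longrightarrow> (x, v) \<in> P \<Longrightarrow> u \<le> y \<Longrightarrow> y \<le> v \<Longrightarrow> (x, y) \<in> P"
    using assms(1) unfolding convex_polyomino_def by blast
  then show ?thesis
    using assms(2-5) by (cases "y1 \<le> y2") auto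
qed

lemma centered_convex_polyomino_full_row:
  assumes "convex_polyomino P" "centered P"
  obtains y0 where "\<And>c. c \<in> P \<Longrightarrow> (fst c, y0) \<in> P"
proof -
  obtain y0 where y0: "(Min (fst ` P), y0) \<in> P" "(Max (fst ` P), y0) \<in> P"
    using assms(2) unfolding centered_def by blast
  have "finite P"
    using assms(1) unfolding convex_polyomino_def polyomino_def by blast
  then have "Min (fst ` P) \<le> fst c \<and> fst c \<le> Max (fst ` P)" if "c \<in> P" for c
    using that by simp
  then have "(fst c, y0) \<in> P" if "c \<in> P" for c
    using convex_polyomino_row[OF assms(1) y0, of "fst c"] that by fastforce
  then show thesis
    using that by blast
qed

lemma SES_path_via_row:
  assumes conv: "convex_polyomino P" and "a \<in> P" "b \<in> P"
    and m: "snd b \<le> m" "m \<le> snd a" and am: "(fst a, m) \<in> P" and bm: "(fst b, m) \<in> P"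
  shows "\<exists>h1 k h2 d. d \<in> {E, W} \<and> is_path P a b (SES_word h1 d k h2)"
proof -
  define d where "d = (if fst a \<le> fst b then E else W)"
  define h1 where "h1 = nat (snd a - m)"
  define k where "k = nat \<bar>fst b - fst a\<bar>"
  define h2 where "h2 = nat (m - snd b)"
  have d: "d \<in> {E, W}" "dy d = 0" "int k * dx d = fst b - fst a"
    by (auto simp: d_def k_def)
  have a: "(fst a, snd a) \<in> P" and b: "(fst b, snd b) \<in> P"
    using \<open>a \<in> P\<close> \<open>b \<in> P\<close> by simp_all
  have last1: "last (visited a (replicate h1 S)) = (fst a, m)"
    using m by (simp add: last_visited_replicate h1_def)
  have last2: "last (visited (fst a, m) (replicate k d)) = (fst b, m)"
    using d by (simp add: last_visited_replicate)
  have last3: "last (visited (fst b, m) (replicate h2 S)) = b"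
    using m by (simp add: last_visited_replicate h2_def)
  have "set (visited a (replicate h1 S)) \<subseteq> P"
    using m convex_polyomino_column[OF conv am a] by (auto simp: set_visited_replicate h1_def)
  moreover have "set (visited (fst a, m) (replicate k d)) \<subseteq> P"
    using d convex_polyomino_row[OF conv am bm]
    by (auto simp: set_visited_replicate k_def d_def)
  moreover have "set (visited (fst b, m) (replicate h2 S)) \<subseteq> P"
    using m convex_polyomino_column[OF conv b bm] by (auto simp: set_visited_replicate h2_def)
  ultimately have "is_path P a b (SES_word h1 d k h2)"
    unfolding is_path_def SES_word_def
    using last1 last2 last3 distinct_visited_SES_word[OF d(1), of a h1 k h2]
    by (simp add: set_visited_append last_visited_append SES_word_def)
  then show ?thesis
    using d by blast
qed

lemma centered_SES_path_downwards:
  assumes conv: "convex_polyomino P" and "centered P"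
    and "a \<in> P" "b \<in> P" "snd b \<le> snd a"
  shows "\<exists>h1 k h2 d. d \<in> {E, W} \<and> is_path P a b (SES_word h1 d k h2)"
proof -
  obtain y0 where y0: "\<And>c. c \<in> P \<Longrightarrow> (fst c, y0) \<in> P"
    using centered_convex_polyomino_full_row[OF conv \<open>centered P\<close>] by blast
  define m where "m = max (snd b) (min (snd a) y0)"
  have m: "snd b \<le> m" "m \<le> snd a"
    using assms(5) by (auto simp: m_def)
  have "min (snd a) y0 \<le> m" "m \<le> max (snd a) y0" "min (snd b) y0 \<le> m" "m \<le> max (snd b) y0"
    using assms(5) by (auto simp: m_def min_def max_def)
  then have "(fst a, m) \<in> P" "(fst b, m) \<in> P"
    using convex_polyomino_column[OF conv _ y0] \<open>a \<in> P\<close> \<open>b \<in> P\<close> by (metis prod.collapse)+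
  then show ?thesis
    using SES_path_via_row[OF conv \<open>a \<in> P\<close> \<open>b \<in> P\<close> m] by blast
qed

lemma centered_SES_path:
  assumes "convex_polyomino P" "centered P" "a \<in> P" "b \<in> P"
  shows "\<exists>h1 k h2 d. d \<in> {E, W} \<and>
    (is_path P a b (SES_word h1 d k h2) \<or> is_path P b a (SES_word h1 d k h2))"
proof (cases "snd b \<le> snd a")
  case True
  then show ?thesis
    using centered_SES_path_downwards[OF assms] by blast
next
  case False
  then show ?thesis
    using centered_SES_path_downwards[OF assms(1,2,4,3)] by fastforce
qed

lemma SES_path_common_row:
  assumes "is_path P a b (SES_word h1 d k h2)" "d \<in> {E, W}"
  shows "(fst a, snd a - int h1) \<in> P \<and> (fst b, snd a - int h1) \<in> P"
proof -
  define c1 where "c1 = last (visited a (replicate h1 S))"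
  define c2 where "c2 = last (visited c1 (replicate k d))"
  have c1: "c1 = (fst a, snd a - int h1)"
    by (simp add: c1_def last_visited_replicate)
  have c2: "c2 = (fst b, snd c1)"
  proof -
    have "b = last (visited c2 (replicate h2 S))"
      using assms(1) unfolding is_path_def SES_word_def
      by (simp add: last_visited_append c1_def c2_def)
    moreover have "snd c2 = snd c1"
      using assms(2) by (auto simp: c2_def last_visited_replicate)
    ultimately show ?thesis
      by (simp add: last_visited_replicate prod_eq_iff)
  qed
  have "c1 \<in> set (visited c1 (replicate k d))" "c2 \<in> set (visited c1 (replicate k d))"
    by (simp_all add: start_in_set_visited c2_def visited_not_Nil)
  moreover have "set (visited c1 (replicate k d)) \<subseteq> P"
    using assms(1) unfolding is_path_def SES_word_def
    by (simp add: set_visited_append c1_def)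
  ultimately show ?thesis
    using c1 c2 by auto
qed

theorem mainTheorem2:
  assumes "convex_polyomino P"
  shows "centered P \<longleftrightarrow>
    (\<forall>a\<in>P. \<forall>b\<in>P. \<exists>h1 k h2 d. d \<in> {E, W} \<and>
        (is_path P a b (SES_word h1 d k h2) \<or> is_path P b a (SES_word h1 d k h2)))"
proof
  assume "centered P"
  then show "\<forall>a\<in>P. \<forall>b\<in>P. \<exists>h1 k h2 d. d \<in> {E, W} \<and>
      (is_path P a b (SES_word h1 d k h2) \<or> is_path P b a (SES_word h1 d k h2))"
    using centered_SES_path[OF assms \<open>centered P\<close>] by (intro ballI)
next
  assume paths: "\<forall>a\<in>P. \<forall>b\<in>P. \<exists>h1 k h2 d. d \<in> {E, W} \<and>
      (is_path P a b (SES_word h1 d k h2) \<or> is_path P b a (SES_word h1 d k h2))"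
  have "finite P" "P \<noteq> {}"
    using assms unfolding convex_polyomino_def polyomino_def by blast+
  then have "Min (fst ` P) \<in> fst ` P" "Max (fst ` P) \<in> fst ` P"
    by auto
  then obtain L R where L: "L \<in> P" "fst L = Min (fst ` P)" and R: "R \<in> P" "fst R = Max (fst ` P)"
    by (auto simp: image_iff)
  obtain h1 k h2 d where d: "d \<in> {E, W}"
    and path: "is_path P L R (SES_word h1 d k h2) \<or> is_path P R L (SES_word h1 d k h2)"
    using paths[rule_format, OF L(1) R(1)] by blast
  from path obtain y where "(fst L, y) \<in> P" "(fst R, y) \<in> P"
    by (elim disjE) (blast dest: SES_path_common_row[OF _ d])+
  then show "centered P"
    unfolding centered_def L(2)[symmetric] R(2)[symmetric] by blast
qed

end
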